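(* Let $W$ be a standard Brownian motion with respect to $\mathbb F$, $W_0=0$, and consider the case without hedging instruments ($S\equiv1$), so that $u_A(\tau,\sigma)=E[-\exp(\alpha_A R(\tau,\sigma))]$ and $u_B(\tau,\sigma)=E[-\exp(-\alpha_B R(\tau,\sigma))]$ (i.e. $C_A=C_B=0$). Let $X_t=W_t$ and $Y_t=W_t+\delta$, $t\in[0,T]$, with $0<\delta<(\alpha_A/2)T$ and $\alpha_B>0$. Then both $(\tau,\sigma)=(0,T)$ and $(\tau,\sigma)=(T,0)$ are Nash equilibrium points, and their values differ: $(u_A,u_B)=(-1,-1)$ at $(0,T)$ and $(u_A,u_B)=(-e^{\alpha_A\delta},-e^{-\alpha_B\delta})$ at $(T,0)$.
   Context: $(\Omega,\mathcal F,\mathbb F=(\mathcal F_t)_{t\in[0,T]},P)$ is a filtered probability space with $T\in(0,\infty)$ satisfying the usual conditions; $\mathcal T_0$ is the set of $[0,T]$-valued stopping times. $\alpha_A>0$ and $\alpha_B>0$ are the risk aversions of the seller $A$ and buyer $B$; $R(\tau,\sigma):=X_\tau\mathbf 1_{\{\tau\le\sigma\}}+Y_\sigma\mathbf 1_{\{\sigma<\tau\}}$ is the payoff paid by $A$ to $B$ when $B$ stops at $\tau$ and $A$ at $\sigma$. A pair $(\tau^*,\sigma^* )\in\mathcal T_0^2$ is a Nash equilibrium point if $u_A(\tau^*,\sigma^* )\ge u_A(\tau^*,\sigma)$ and $u_B(\tau^*,\sigma^* )\ge u_B(\tau,\sigma^* )$ for all $\tau,\sigma\in\mathcal T_0$.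 *)

theory Defs
  imports "HOL-Probability.Probability"
begin

definition filtered_prob_space_usual ::
  "'a measure \<Rightarrow> (real \<Rightarrow> 'a measure) \<Rightarrow> real \<Rightarrow> bool" where
  "filtered_prob_space_usual M F T \<longleftrightarrow>
     prob_space M \<and> 0 < T \<and>
     (\<forall>t\<in>{0..T}. space (F t) = space M \<and> sets (F t) \<subseteq> sets M) \<and>
     (\<forall>s t. 0 \<le> s \<longrightarrow> s \<le> t \<longrightarrow> t \<le> T \<longrightarrow> sets (F s) \<subseteq> sets (F t)) \<and>
     (\<forall>N\<in>null_sets M. \<forall>A. A \<subseteq> N \<longrightarrow> A \<in> sets (F 0)) \<and>
     (\<forall>t\<in>{0..<T}. sets (F t) = (\<Inter>s\<in>{t<..T}. sets (F s)))"

definition stopping_times0 ::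
  "'a measure \<Rightarrow> (real \<Rightarrow> 'a measure) \<Rightarrow> real \<Rightarrow> ('a \<Rightarrow> real) set" where
  "stopping_times0 M F T =
     {\<tau>. (\<forall>\<omega>\<in>space M. \<tau> \<omega> \<in> {0..T}) \<and>
          (\<forall>t\<in>{0..T}. {\<omega>\<in>space M. \<tau> \<omega> \<le> t} \<in> sets (F t))}"

definition brownian_motion ::
  "'a measure \<Rightarrow> (real \<Rightarrow> 'a measure) \<Rightarrow> real \<Rightarrow> (real \<Rightarrow> 'a \<Rightarrow> real) \<Rightarrow> bool" where
  "brownian_motion M F T W \<longleftrightarrow>
     (\<forall>t\<in>{0..T}. W t \<in> borel_measurable (F t)) \<and>
     (\<forall>\<omega>\<in>space M. W 0 \<omega> = 0) \<and>
     (\<forall>\<omega>\<in>space M. continuous_on {0..T} (\<lambda>t. W t \<omega>)) \<and>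
     (\<forall>s t. 0 \<le> s \<longrightarrow> s < t \<longrightarrow> t \<le> T \<longrightarrow>
        distributed M lborel (\<lambda>\<omega>. W t \<omega> - W s \<omega>) (\<lambda>x. ennreal (normal_density 0 (sqrt (t - s)) x)) \<and>
        (\<forall>A\<in>sets (F s). \<forall>B\<in>sets borel.
           measure M ({\<omega>\<in>space M. W t \<omega> - W s \<omega> \<in> B} \<inter> A) =
           measure M {\<omega>\<in>space M. W t \<omega> - W s \<omega> \<in> B} * measure M A))"

definition payoff ::
  "(real \<Rightarrow> 'a \<Rightarrow> real) \<Rightarrow> (real \<Rightarrow> 'a \<Rightarrow> real) \<Rightarrow> ('a \<Rightarrow> real) \<Rightarrow> ('a \<Rightarrow> real) \<Rightarrow> 'a \<Rightarrow> real" where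
  "payoff X Y \<tau> \<sigma> \<omega> = (if \<tau> \<omega> \<le> \<sigma> \<omega> then X (\<tau> \<omega>) \<omega> else Y (\<sigma> \<omega>) \<omega>)"

text \<open>Utilities without hedging instruments (S = 1, C_A = C_B = 0).\<close>
definition uA :: "'a measure \<Rightarrow> real \<Rightarrow> (real \<Rightarrow> 'a \<Rightarrow> real) \<Rightarrow> (real \<Rightarrow> 'a \<Rightarrow> real)
    \<Rightarrow> ('a \<Rightarrow> real) \<Rightarrow> ('a \<Rightarrow> real) \<Rightarrow> real" where
  "uA M \<alpha>A X Y \<tau> \<sigma> = (\<integral>\<omega>. - exp (\<alpha>A * payoff X Y \<tau> \<sigma> \<omega>) \<partial>M)"

definition uB :: "'a measure \<Rightarrow> real \<Rightarrow> (real \<Rightarrow> 'a \<Rightarrow> real) \<Rightarrow> (real \<Rightarrow> 'a \<Rightarrow> real)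
    \<Rightarrow> ('a \<Rightarrow> real) \<Rightarrow> ('a \<Rightarrow> real) \<Rightarrow> real" where
  "uB M \<alpha>B X Y \<tau> \<sigma> = (\<integral>\<omega>. - exp (- \<alpha>B * payoff X Y \<tau> \<sigma> \<omega>) \<partial>M)"

definition nash_equilibrium ::
  "'a measure \<Rightarrow> (real \<Rightarrow> 'a measure) \<Rightarrow> real \<Rightarrow> real \<Rightarrow> real \<Rightarrow>
   (real \<Rightarrow> 'a \<Rightarrow> real) \<Rightarrow> (real \<Rightarrow> 'a \<Rightarrow> real) \<Rightarrow> ('a \<Rightarrow> real) \<Rightarrow> ('a \<Rightarrow> real) \<Rightarrow> bool" where
  "nash_equilibrium M F T \<alpha>A \<alpha>B X Y \<tau>s \<sigma>s \<longleftrightarrow>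
     \<tau>s \<in> stopping_times0 M F T \<and> \<sigma>s \<in> stopping_times0 M F T \<and>
     (\<forall>\<sigma>\<in>stopping_times0 M F T. uA M \<alpha>A X Y \<tau>s \<sigma>s \<ge> uA M \<alpha>A X Y \<tau>s \<sigma>) \<and>
     (\<forall>\<tau>\<in>stopping_times0 M F T. uB M \<alpha>B X Y \<tau>s \<sigma>s \<ge> uB M \<alpha>B X Y \<tau> \<sigma>s)"

end

theory Submission
  imports Defs
begin

text \<open>At \<open>(0, T)\<close> the buyer stops immediately and receives \<open>W 0 = 0\<close>; at \<open>(T, 0)\<close>
  the seller stops immediately and pays \<open>\<delta>\<close>. No unilateral deviation helps, because for
  every \<open>[0,T]\<close>-valued stopping time \<open>\<sigma>\<close> and every real \<open>l\<close> the exponential martingale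
  \<open>Z l t = exp (l W t - l\<^sup>2 t / 2)\<close> satisfies \<open>E [Z l \<sigma>] \<ge> 1\<close>. For \<open>\<sigma>\<close> with finitely many
  grid values this is a telescoping sum of martingale increments; rounding a general \<open>\<sigma>\<close> up to
  finer and finer grids, the inequality survives the limit because \<open>Z l\<close> is bounded in \<open>L\<^sup>2\<close>.
  Consequently \<open>E [exp (- \<alpha>B W \<tau>)] \<ge> E [Z (- \<alpha>B) \<tau>] \<ge> 1\<close>, and since
  \<open>\<alpha>A \<delta> \<le> \<alpha>A\<^sup>2 T / 2\<close>, also \<open>E [exp (\<alpha>A R(T, \<sigma>))] \<ge> exp (\<alpha>A \<delta>) E [Z \<alpha>A \<sigma>] \<ge> exp (\<alpha>A \<delta>)\<close>.\<close>

section \<open>Limits of expectations\<close>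

lemma le_min_plus_square_div:
  fixes x K :: real
  assumes "0 \<le> x" "0 < K"
  shows "x \<le> min x K + x\<^sup>2 / K"
proof (cases "x \<le> K")
  case True
  then show ?thesis using assms by (simp add: min_def)
next
  case False
  then have "x * K \<le> x * x" using assms by (intro mult_left_mono) auto
  then have "x \<le> x\<^sup>2 / K" using assms by (simp add: field_simps power2_eq_square)
  then show ?thesis using False assms by (simp add: min_def)
qed

lemma (in prob_space) expectation_eq_const:
  fixes f :: "'a \<Rightarrow> real"
  shows "(\<And>\<omega>. \<omega> \<in> space M \<Longrightarrow> f \<omega> = c) \<Longrightarrow> expectation f = c"
  using Bochner_Integration.integral_cong[OF refl, of M f "\<lambda>_. c"] by (simp add: integral_const prob_space)

lemma (in prob_space) integrable_limit_of_nonneg_bounded: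
  fixes X :: "nat \<Rightarrow> 'a \<Rightarrow> real"
  assumes int: "\<And>n. integrable M (X n)"
    and nonneg: "\<And>n \<omega>. \<omega> \<in> space M \<Longrightarrow> 0 \<le> X n \<omega>"
    and lim: "\<And>\<omega>. \<omega> \<in> space M \<Longrightarrow> (\<lambda>n. X n \<omega>) \<longlonglongrightarrow> Y \<omega>"
    and bounded: "\<And>n. expectation (X n) \<le> C"
  shows "integrable M Y"
proof (rule integrableI_nonneg)
  have X: "X n \<in> borel_measurable M" for n using int by blast
  show "Y \<in> borel_measurable M" by (rule borel_measurable_LIMSEQ_real[OF lim X])
  show "AE \<omega> in M. 0 \<le> Y \<omega>"
    using lim nonneg by (intro AE_I2) (meson LIMSEQ_le_const)
  have "(\<integral>\<^sup>+ \<omega>. ennreal (Y \<omega>) \<partial>M) = (\<integral>\<^sup>+ \<omega>. liminf (\<lambda>n. ennreal (X n \<omega>)) \<partial>M)"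
    using lim by (intro nn_integral_cong) (simp add: lim_imp_Liminf[symmetric] tendsto_ennrealI)
  also have "\<dots> \<le> liminf (\<lambda>n. \<integral>\<^sup>+ \<omega>. ennreal (X n \<omega>) \<partial>M)"
    using int by (intro nn_integral_liminf) auto
  also have "\<dots> \<le> ennreal C"
  proof (rule Liminf_le)
    show "\<forall>\<^sub>F n in sequentially. (\<integral>\<^sup>+ \<omega>. ennreal (X n \<omega>) \<partial>M) \<le> ennreal C"
      using nn_integral_eq_integral[OF int] nonneg bounded by (simp add: AE_I2 ennreal_leI)
  qed simp
  finally show "(\<integral>\<^sup>+ \<omega>. ennreal (Y \<omega>) \<partial>M) < \<infinity>"
    using le_less_trans by fastforce
qed

text \<open>The half of Vitali's convergence theorem that is needed: a bound on second moments
  makes the family uniformly integrable, so expectations cannot drop in the limit.\<close>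
lemma (in prob_space) expectation_limit_ge_of_L2_bounded:
  fixes X :: "nat \<Rightarrow> 'a \<Rightarrow> real"
  assumes int: "\<And>n. integrable M (X n)"
    and nonneg: "\<And>n \<omega>. \<omega> \<in> space M \<Longrightarrow> 0 \<le> X n \<omega>"
    and lim: "\<And>\<omega>. \<omega> \<in> space M \<Longrightarrow> (\<lambda>n. X n \<omega>) \<longlonglongrightarrow> Y \<omega>"
    and expect: "\<And>n. expectation (X n) = c"
    and int_sq: "\<And>n. integrable M (\<lambda>\<omega>. (X n \<omega>)\<^sup>2)"
    and bounded_sq: "\<And>n. expectation (\<lambda>\<omega>. (X n \<omega>)\<^sup>2) \<le> C"
  shows "integrable M Y" and "c \<le> expectation Y"
proof -
  show intY: "integrable M Y"
    using integrable_limit_of_nonneg_bounded[OF int nonneg lim] expect by (metis order_refl)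
  have X: "X n \<in> borel_measurable M" for n using int by blast
  have Y: "Y \<in> borel_measurable M" and Y_nonneg: "\<And>\<omega>. \<omega> \<in> space M \<Longrightarrow> 0 \<le> Y \<omega>"
    using intY lim nonneg by (auto, meson LIMSEQ_le_const)
  have truncated: "c \<le> expectation Y + C / K" if K: "0 < K" for K
  proof -
    have int_min: "integrable M (\<lambda>\<omega>. min (X n \<omega>) K)" for n
      by (rule Bochner_Integration.integrable_bound[OF int[of n]]) (use X nonneg K in \<open>auto intro!: AE_I2\<close>)
    have "c \<le> expectation (\<lambda>\<omega>. min (X n \<omega>) K) + C / K" for n
    proof -
      have "c \<le> expectation (\<lambda>\<omega>. min (X n \<omega>) K + (X n \<omega>)\<^sup>2 / K)"
        unfolding expect[of n, symmetric]
        by (rule integral_mono) (use int_min int_sq int nonneg K le_min_plus_square_div in auto)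
      also have "\<dots> \<le> expectation (\<lambda>\<omega>. min (X n \<omega>) K) + C / K"
        using int_min int_sq[of n] bounded_sq[of n] K by (simp add: divide_right_mono)
      finally show ?thesis .
    qed
    moreover have "(\<lambda>n. expectation (\<lambda>\<omega>. min (X n \<omega>) K)) \<longlonglongrightarrow> expectation (\<lambda>\<omega>. min (Y \<omega>) K)"
      by (rule integral_dominated_convergence[where w="\<lambda>_. K"])
         (use X Y lim nonneg K in \<open>auto intro!: AE_I2 tendsto_min\<close>)
    ultimately have "c \<le> expectation (\<lambda>\<omega>. min (Y \<omega>) K) + C / K"
      by (intro LIMSEQ_le_const[where X="\<lambda>n. expectation (\<lambda>\<omega>. min (X n \<omega>) K) + C / K"])
         (auto intro!: tendsto_add)
    moreover have "expectation (\<lambda>\<omega>. min (Y \<omega>) K) \<le> expectation Y"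
      by (rule integral_mono) (use intY Y Y_nonneg K in \<open>auto intro!: Bochner_Integration.integrable_bound[OF intY] AE_I2\<close>)
    ultimately show ?thesis by simp
  qed
  have "(\<lambda>n. expectation Y + C / real (Suc n)) \<longlonglongrightarrow> expectation Y + C * 0"
    unfolding divide_inverse by (intro tendsto_intros LIMSEQ_inverse_real_of_nat)
  then have "(\<lambda>n. expectation Y + C / real (Suc n)) \<longlonglongrightarrow> expectation Y" by simp
  then show "c \<le> expectation Y"
    by (rule LIMSEQ_le_const) (use truncated in simp)
qed

section \<open>Stopping times and their grid approximations\<close>

locale usual_filtration =
  fixes M :: "'a measure" and F :: "real \<Rightarrow> 'a measure" and T :: real
  assumes usual: "filtered_prob_space_usual M F T"
begin

sublocale prob_space M
  using usual by (simp add: filtered_prob_space_usual_def)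

lemma horizon_pos: "0 < T"
  using usual by (simp add: filtered_prob_space_usual_def)

lemma space_F: "t \<in> {0..T} \<Longrightarrow> space (F t) = space M"
  using usual by (simp add: filtered_prob_space_usual_def)

lemma sets_F_subset: "t \<in> {0..T} \<Longrightarrow> sets (F t) \<subseteq> sets M"
  using usual by (simp add: filtered_prob_space_usual_def)

lemma measurable_F_imp_measurable:
  assumes "t \<in> {0..T}" "f \<in> measurable (F t) N"
  shows "f \<in> measurable M N"
  using assms(2) space_F[OF assms(1)] sets_F_subset[OF assms(1)] by (auto simp: measurable_def)

lemma stopping_time_range:
  "\<tau> \<in> stopping_times0 M F T \<Longrightarrow> \<omega> \<in> space M \<Longrightarrow> 0 \<le> \<tau> \<omega> \<and> \<tau> \<omega> \<le> T"
  by (auto simp: stopping_times0_def)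

lemma stopping_time_le_sets:
  "\<tau> \<in> stopping_times0 M F T \<Longrightarrow> t \<in> {0..T} \<Longrightarrow> {\<omega>\<in>space M. \<tau> \<omega> \<le> t} \<in> sets (F t)"
  by (auto simp: stopping_times0_def)

lemma stopping_time_borel_measurable:
  assumes \<tau>: "\<tau> \<in> stopping_times0 M F T"
  shows "\<tau> \<in> borel_measurable M"
proof (subst borel_measurable_iff_le, intro allI)
  fix a
  consider "a < 0" | "a \<in> {0..T}" | "T < a" by (meson atLeastAtMost_iff not_le)
  then show "{\<omega> \<in> space M. \<tau> \<omega> \<le> a} \<in> sets M"
  proof cases
    case 1
    then have "{\<omega> \<in> space M. \<tau> \<omega> \<le> a} = {}" by (auto dest: stopping_time_range[OF \<tau>])
    then show ?thesis by (simp only: sets.empty_sets)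
  next
    case 2
    then show ?thesis using stopping_time_le_sets[OF \<tau>] sets_F_subset by blast
  next
    case 3
    then have "{\<omega> \<in> space M. \<tau> \<omega> \<le> a} = space M" by (auto dest: stopping_time_range[OF \<tau>])
    then show ?thesis by simp
  qed
qed

lemma const_stopping_time: "c \<in> {0..T} \<Longrightarrow> (\<lambda>_. c) \<in> stopping_times0 M F T"
  unfolding stopping_times0_def
proof safe
  fix t assume "c \<in> {0..T}" and t: "t \<in> {0..T}"
  show "{\<omega> \<in> space M. c \<le> t} \<in> sets (F t)"
  proof (cases "c \<le> t")
    case True
    then show ?thesis using sets.top[of "F t"] space_F[OF t] by simp
  qed simp
qed

end

text \<open>Rounding \<open>\<tau>\<close> up to the grid \<open>{k T / (n + 1) | k \<le> n + 1}\<close> gives a stopping time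
  with finitely many values that decreases to \<open>\<tau>\<close>.\<close>
definition grid_index :: "real \<Rightarrow> nat \<Rightarrow> ('a \<Rightarrow> real) \<Rightarrow> 'a \<Rightarrow> nat" where
  "grid_index T n \<tau> \<omega> = nat \<lceil>\<tau> \<omega> * real (Suc n) / T\<rceil>"

definition grid_time :: "real \<Rightarrow> nat \<Rightarrow> ('a \<Rightarrow> real) \<Rightarrow> 'a \<Rightarrow> real" where
  "grid_time T n \<tau> \<omega> = real (grid_index T n \<tau> \<omega>) * T / real (Suc n)"

context usual_filtration
begin

lemma grid_index_le_iff:
  assumes "\<tau> \<in> stopping_times0 M F T" "\<omega> \<in> space M"
  shows "grid_index T n \<tau> \<omega> \<le> k \<longleftrightarrow> \<tau> \<omega> \<le> real k * T / real (Suc n)"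
proof -
  have "grid_index T n \<tau> \<omega> \<le> k \<longleftrightarrow> \<tau> \<omega> * real (Suc n) / T \<le> real k"
    unfolding grid_index_def by (simp add: nat_le_iff ceiling_le_iff)
  also have "\<dots> \<longleftrightarrow> \<tau> \<omega> \<le> real k * T / real (Suc n)"
    using horizon_pos by (simp add: field_simps del: of_nat_Suc)
  finally show ?thesis .
qed

lemma grid_index_le:
  assumes "\<tau> \<in> stopping_times0 M F T" "\<omega> \<in> space M"
  shows "grid_index T n \<tau> \<omega> \<le> Suc n"
  using grid_index_le_iff[OF assms, of n "Suc n"] stopping_time_range[OF assms] horizon_pos by simp

lemma grid_time_bounds:
  assumes "\<tau> \<in> stopping_times0 M F T" "\<omega> \<in> space M"
  shows "\<tau> \<omega> \<le> grid_time T n \<tau> \<omega>" "grid_time T n \<tau> \<omega> \<le> \<tau> \<omega> + T / real (Suc n)"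
    "grid_time T n \<tau> \<omega> \<le> T"
proof -
  define x where "x = \<tau> \<omega> * real (Suc n) / T"
  have "0 \<le> x" using stopping_time_range[OF assms] horizon_pos by (simp add: x_def)
  then have grid: "grid_time T n \<tau> \<omega> = of_int \<lceil>x\<rceil> * T / real (Suc n)"
    unfolding grid_time_def grid_index_def x_def[symmetric] by simp
  have \<tau>: "\<tau> \<omega> = x * T / real (Suc n)"
    using horizon_pos by (simp add: x_def field_simps del: of_nat_Suc)
  show "\<tau> \<omega> \<le> grid_time T n \<tau> \<omega>" unfolding grid \<tau> using horizon_pos
    by (intro divide_right_mono mult_right_mono le_of_int_ceiling) auto
  have "grid_time T n \<tau> \<omega> \<le> (x + 1) * T / real (Suc n)"
    unfolding grid using horizon_pos ceiling_correct[of x]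
    by (intro divide_right_mono mult_right_mono) auto
  then show "grid_time T n \<tau> \<omega> \<le> \<tau> \<omega> + T / real (Suc n)"
    unfolding \<tau> by (simp add: distrib_right add_divide_distrib)
  have "real (grid_index T n \<tau> \<omega>) * T \<le> real (Suc n) * T"
    using grid_index_le[OF assms, of n] horizon_pos by (intro mult_right_mono) auto
  then show "grid_time T n \<tau> \<omega> \<le> T"
    unfolding grid_time_def by (simp add: field_simps del: of_nat_Suc)
qed

lemma grid_time_tendsto:
  assumes "\<tau> \<in> stopping_times0 M F T" "\<omega> \<in> space M"
  shows "(\<lambda>n. grid_time T n \<tau> \<omega>) \<longlonglongrightarrow> \<tau> \<omega>"
proof (rule tendsto_sandwich[of "\<lambda>_. \<tau> \<omega>" _ _ "\<lambda>n. \<tau> \<omega> + T * inverse (real (Suc n))"])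
  show "\<forall>\<^sub>F n in sequentially. \<tau> \<omega> \<le> grid_time T n \<tau> \<omega>"
    using grid_time_bounds(1)[OF assms] by simp
  show "\<forall>\<^sub>F n in sequentially. grid_time T n \<tau> \<omega> \<le> \<tau> \<omega> + T * inverse (real (Suc n))"
    using grid_time_bounds(2)[OF assms] by (simp add: divide_inverse)
  have "(\<lambda>n. \<tau> \<omega> + T * inverse (real (Suc n))) \<longlonglongrightarrow> \<tau> \<omega> + T * 0"
    by (intro tendsto_intros LIMSEQ_inverse_real_of_nat)
  then show "(\<lambda>n. \<tau> \<omega> + T * inverse (real (Suc n))) \<longlonglongrightarrow> \<tau> \<omega>" by simp
qed simp

text \<open>Abel summation: a process stopped at the grid time is its terminal value minus the
  increments over the grid cells lying after the stopping time.\<close>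
lemma stopped_at_grid_time_eq_sum:
  fixes Z :: "real \<Rightarrow> 'a \<Rightarrow> real" and n :: nat
  assumes "\<tau> \<in> stopping_times0 M F T" "\<omega> \<in> space M"
  defines "t \<equiv> \<lambda>k. real k * T / real (Suc n)"
  shows "Z (grid_time T n \<tau> \<omega>) \<omega> = Z T \<omega> -
    (\<Sum>k<Suc n. (Z (t (Suc k)) \<omega> - Z (t k) \<omega>) * indicator {\<omega>\<in>space M. \<tau> \<omega> \<le> t k} \<omega>)"
proof -
  define j where "j = grid_index T n \<tau> \<omega>"
  have "(\<Sum>k<Suc n. (Z (t (Suc k)) \<omega> - Z (t k) \<omega>) * indicator {\<omega>\<in>space M. \<tau> \<omega> \<le> t k} \<omega>)
      = (\<Sum>k<Suc n. if j \<le> k then Z (t (Suc k)) \<omega> - Z (t k) \<omega> else 0)"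
    using grid_index_le_iff[OF assms(1,2)] assms(2) by (intro sum.cong) (auto simp: t_def j_def)
  also have "\<dots> = (\<Sum>k\<in>{k\<in>{..<Suc n}. j \<le> k}. Z (t (Suc k)) \<omega> - Z (t k) \<omega>)"
    by (rule sum.inter_filter[symmetric]) simp
  also have "{k\<in>{..<Suc n}. j \<le> k} = {j..<Suc n}" by auto
  also have "(\<Sum>k\<in>{j..<Suc n}. Z (t (Suc k)) \<omega> - Z (t k) \<omega>) = Z (t (Suc n)) \<omega> - Z (t j) \<omega>"
    using grid_index_le[OF assms(1,2)] unfolding j_def by (rule sum_Suc_diff')
  finally show ?thesis
    unfolding t_def j_def grid_time_def by (simp del: of_nat_Suc)
qed

end

section \<open>Brownian motion on a usual filtration\<close>

lemma integral_normal_density_mult_exp: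
  assumes "0 < s"
  shows "integrable lborel (\<lambda>x. normal_density 0 s x * exp (l * x))"
    and "(\<integral>x. normal_density 0 s x * exp (l * x) \<partial>lborel) = exp (l\<^sup>2 * s\<^sup>2 / 2)"
proof -
  have shift: "normal_density 0 s x * exp (l * x) = exp (l\<^sup>2 * s\<^sup>2 / 2) * normal_density (l * s\<^sup>2) s x" for x
  proof -
    have "- (x - 0)\<^sup>2 / (2 * s\<^sup>2) + l * x = l\<^sup>2 * s\<^sup>2 / 2 + (- (x - l * s\<^sup>2)\<^sup>2 / (2 * s\<^sup>2))"
      using assms by (simp add: field_simps power2_eq_square)
    then show ?thesis
      unfolding normal_density_def by (simp add: exp_add[symmetric] mult_ac)
  qed
  show "integrable lborel (\<lambda>x. normal_density 0 s x * exp (l * x))"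
    unfolding shift using assms by (intro integrable_mult_right integrable_normal_density)
  show "(\<integral>x. normal_density 0 s x * exp (l * x) \<partial>lborel) = exp (l\<^sup>2 * s\<^sup>2 / 2)"
    unfolding shift using assms by simp
qed

lemma Int_stable_vimage: "Int_stable {f -` A \<inter> S | A. A \<in> sets N}"
  unfolding Int_stable_def
proof safe
  fix A B assume "A \<in> sets N" "B \<in> sets N"
  then show "\<exists>C. f -` A \<inter> S \<inter> (f -` B \<inter> S) = f -` C \<inter> S \<and> C \<in> sets N"
    by (intro exI[of _ "A \<inter> B"]) auto
qed

locale brownian_filtration = usual_filtration M F T for M :: "'a measure" and F T +
  fixes W :: "real \<Rightarrow> 'a \<Rightarrow> real"
  assumes brownian: "brownian_motion M F T W"
begin

lemma W_F_measurable: "t \<in> {0..T} \<Longrightarrow> W t \<in> borel_measurable (F t)"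
  using brownian by (simp add: brownian_motion_def)

lemma W_measurable[measurable]: "t \<in> {0..T} \<Longrightarrow> W t \<in> borel_measurable M"
  using measurable_F_imp_measurable W_F_measurable by blast

lemma W_zero: "\<omega> \<in> space M \<Longrightarrow> W 0 \<omega> = 0"
  using brownian by (simp add: brownian_motion_def)

lemma W_continuous: "\<omega> \<in> space M \<Longrightarrow> continuous_on {0..T} (\<lambda>t. W t \<omega>)"
  using brownian by (simp add: brownian_motion_def)

lemma increment_distributed: "0 \<le> s \<Longrightarrow> s < t \<Longrightarrow> t \<le> T \<Longrightarrow>
    distributed M lborel (\<lambda>\<omega>. W t \<omega> - W s \<omega>) (\<lambda>x. ennreal (normal_density 0 (sqrt (t - s)) x))"
  using brownian by (simp add: brownian_motion_def)

lemma increment_indep_events: "0 \<le> s \<Longrightarrow> s < t \<Longrightarrow> t \<le> T \<Longrightarrow> A \<in> sets (F s) \<Longrightarrow> B \<in> sets borel \<Longrightarrow>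
    prob ({\<omega>\<in>space M. W t \<omega> - W s \<omega> \<in> B} \<inter> A) = prob {\<omega>\<in>space M. W t \<omega> - W s \<omega> \<in> B} * prob A"
  using brownian by (simp add: brownian_motion_def)

lemma increment_exp_expectation:
  assumes "0 \<le> s" "s < t" "t \<le> T"
  shows "integrable M (\<lambda>\<omega>. exp (l * (W t \<omega> - W s \<omega>)))"
    and "expectation (\<lambda>\<omega>. exp (l * (W t \<omega> - W s \<omega>))) = exp (l\<^sup>2 * (t - s) / 2)"
proof -
  note D = increment_distributed[OF assms]
  have s: "0 < sqrt (t - s)" using assms by simp
  show "integrable M (\<lambda>\<omega>. exp (l * (W t \<omega> - W s \<omega>)))"
    using distributed_integrable[OF D, of "\<lambda>x. exp (l * x)"] integral_normal_density_mult_exp(1)[OF s] by simp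
  show "expectation (\<lambda>\<omega>. exp (l * (W t \<omega> - W s \<omega>))) = exp (l\<^sup>2 * (t - s) / 2)"
    using distributed_integral[OF D, of "\<lambda>x. exp (l * x)"] integral_normal_density_mult_exp(2)[OF s] assms
    by simp
qed

lemma indep_var_increment:
  fixes h :: "'a \<Rightarrow> real" and g :: "real \<Rightarrow> real"
  assumes st: "0 \<le> s" "s < t" "t \<le> T" and h: "h \<in> borel_measurable (F s)"
    and g: "g \<in> borel_measurable borel"
  shows "indep_var borel h borel (\<lambda>\<omega>. g (W t \<omega> - W s \<omega>))"
proof -
  have sT: "s \<in> {0..T}" "t \<in> {0..T}" using st by auto
  have hM: "h \<in> borel_measurable M" using measurable_F_imp_measurable[OF sT(1) h] .
  have gM: "(\<lambda>\<omega>. g (W t \<omega> - W s \<omega>)) \<in> borel_measurable M" using sT g by measurable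
  let ?A = "{h -` A \<inter> space M | A. A \<in> sets (borel :: real measure)}"
  let ?B = "{(\<lambda>\<omega>. g (W t \<omega> - W s \<omega>)) -` B \<inter> space M | B. B \<in> sets (borel :: real measure)}"
  have "indep_set ?A ?B"
  proof (rule indep_setI)
    show "?A \<subseteq> events" using hM by (auto intro: measurable_sets)
    show "?B \<subseteq> events" using gM by (auto intro: measurable_sets)
    fix a b assume "a \<in> ?A" "b \<in> ?B"
    then obtain A B where A: "A \<in> sets borel" "a = h -` A \<inter> space M"
      and B: "B \<in> sets borel" "b = {\<omega>\<in>space M. W t \<omega> - W s \<omega> \<in> g -` B}" by auto
    have "a \<in> sets (F s)" using measurable_sets[OF h A(1)] A(2) space_F[OF sT(1)] by simp
    moreover have "g -` B \<in> sets borel" using measurable_sets[OF g B(1)] by simp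
    ultimately have "prob (b \<inter> a) = prob b * prob a"
      unfolding B(2) by (rule increment_indep_events[OF st])
    then show "prob (a \<inter> b) = prob a * prob b" by (simp add: Int_commute mult.commute)
  qed
  then have "indep_set (sigma_sets (space M) ?A) (sigma_sets (space M) ?B)"
    by (intro indep_set_sigma_sets Int_stable_vimage)
  then show ?thesis using hM gM by (simp add: indep_var_eq)
qed

lemma expectation_mult_exp_increment:
  fixes h :: "'a \<Rightarrow> real"
  assumes st: "0 \<le> s" "s < t" "t \<le> T" and h: "h \<in> borel_measurable (F s)" "integrable M h"
  shows "integrable M (\<lambda>\<omega>. h \<omega> * exp (l * (W t \<omega> - W s \<omega>)))"
    and "expectation (\<lambda>\<omega>. h \<omega> * exp (l * (W t \<omega> - W s \<omega>))) = expectation h * exp (l\<^sup>2 * (t - s) / 2)"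
proof -
  have I: "indep_var borel h borel (\<lambda>\<omega>. exp (l * (W t \<omega> - W s \<omega>)))"
    using indep_var_increment[OF st h(1), of "\<lambda>x. exp (l * x)"] by simp
  show "integrable M (\<lambda>\<omega>. h \<omega> * exp (l * (W t \<omega> - W s \<omega>)))"
    by (rule indep_var_integrable[OF I h(2) increment_exp_expectation(1)[OF st]])
  show "expectation (\<lambda>\<omega>. h \<omega> * exp (l * (W t \<omega> - W s \<omega>))) = expectation h * exp (l\<^sup>2 * (t - s) / 2)"
    using indep_var_lebesgue_integral[OF I h(2) increment_exp_expectation(1)[OF st]]
      increment_exp_expectation(2)[OF st] by simp
qed

end

section \<open>The exponential martingale and optional stopping\<close>

definition exp_martingale :: "(real \<Rightarrow> 'a \<Rightarrow> real) \<Rightarrow> real \<Rightarrow> real \<Rightarrow> 'a \<Rightarrow> real" where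
  "exp_martingale W l t \<omega> = exp (l * W t \<omega> - l\<^sup>2 * t / 2)"

lemma exp_martingale_pos: "0 < exp_martingale W l t \<omega>"
  by (simp add: exp_martingale_def)

lemma exp_eq_exp_martingale: "exp (l * W t \<omega>) = exp_martingale W l t \<omega> * exp (l\<^sup>2 * t / 2)"
  unfolding exp_martingale_def by (simp flip: exp_add)

lemma exp_martingale_split:
  "exp_martingale W l t \<omega> = exp_martingale W l s \<omega> * exp (l * (W t \<omega> - W s \<omega>)) * exp (- (l\<^sup>2 * (t - s) / 2))"
proof -
  have "l * W t \<omega> - l\<^sup>2 * t / 2 = (l * W s \<omega> - l\<^sup>2 * s / 2) + l * (W t \<omega> - W s \<omega>) + (- (l\<^sup>2 * (t - s) / 2))"
    by (simp add: field_simps)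
  then show ?thesis unfolding exp_martingale_def by (simp add: exp_add[symmetric])
qed

lemma exp_martingale_square: "(exp_martingale W l t \<omega>)\<^sup>2 = exp_martingale W (2 * l) t \<omega> * exp (l\<^sup>2 * t)"
proof -
  have "2 * (l * W t \<omega> - l\<^sup>2 * t / 2) = (2 * l * W t \<omega> - (2 * l)\<^sup>2 * t / 2) + l\<^sup>2 * t"
    by (simp add: power2_eq_square field_simps)
  then show ?thesis
    unfolding exp_martingale_def power2_eq_square[of "exp _"] by (simp flip: exp_add)
qed

context brownian_filtration
begin

lemma exp_martingale_F_measurable: "t \<in> {0..T} \<Longrightarrow> exp_martingale W l t \<in> borel_measurable (F t)"
  unfolding exp_martingale_def using W_F_measurable[of t] by measurable

lemma exp_martingale_measurable: "t \<in> {0..T} \<Longrightarrow> exp_martingale W l t \<in> borel_measurable M"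
  unfolding exp_martingale_def by measurable

lemma exp_martingale_expectation:
  assumes "t \<in> {0..T}"
  shows "integrable M (exp_martingale W l t)" and "expectation (exp_martingale W l t) = 1"
proof -
  have "integrable M (exp_martingale W l t) \<and> expectation (exp_martingale W l t) = 1"
  proof (cases "t = 0")
    case True
    then have "\<And>\<omega>. \<omega> \<in> space M \<Longrightarrow> exp_martingale W l t \<omega> = 1"
      using W_zero by (simp add: exp_martingale_def)
    then show ?thesis
      by (auto intro!: integrable_const_bound[where B=1] expectation_eq_const exp_martingale_measurable[OF assms])
  next
    case False
    then have st: "0 \<le> (0::real)" "0 < t" "t \<le> T" using assms by auto
    have e: "\<And>\<omega>. \<omega> \<in> space M \<Longrightarrow>
        exp_martingale W l t \<omega> = exp (l * (W t \<omega> - W 0 \<omega>)) * exp (- (l\<^sup>2 * t / 2))"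
      using W_zero by (simp add: exp_martingale_def flip: exp_add)
    have "integrable M (exp_martingale W l t)"
      by (subst Bochner_Integration.integrable_cong[OF refl e]) (use increment_exp_expectation(1)[OF st] in auto)
    moreover have "expectation (exp_martingale W l t) = 1"
    proof -
      have "expectation (exp_martingale W l t)
          = expectation (\<lambda>\<omega>. exp (l * (W t \<omega> - W 0 \<omega>))) * exp (- (l\<^sup>2 * t / 2))"
        by (subst Bochner_Integration.integral_cong[OF refl e]) (assumption, rule integral_mult_left_zero)
      then show ?thesis
        by (simp add: increment_exp_expectation(2)[OF st] flip: exp_add)
    qed
    ultimately show ?thesis ..
  qed
  then show "integrable M (exp_martingale W l t)" and "expectation (exp_martingale W l t) = 1" by auto
qed

lemma exp_martingale_increment_orthogonal:
  assumes st: "0 \<le> s" "s < t" "t \<le> T" and A: "A \<in> sets (F s)"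
  shows "expectation (\<lambda>\<omega>. (exp_martingale W l t \<omega> - exp_martingale W l s \<omega>) * indicator A \<omega>) = 0"
proof -
  have sT: "s \<in> {0..T}" "t \<in> {0..T}" using st by auto
  have AM: "A \<in> sets M" using A sets_F_subset[OF sT(1)] by auto
  define h where "h \<omega> = exp_martingale W l s \<omega> * indicator A \<omega>" for \<omega>
  have h_F: "h \<in> borel_measurable (F s)" unfolding h_def using exp_martingale_F_measurable[OF sT(1)] A by measurable
  have h_int: "integrable M h"
    unfolding h_def by (rule integrable_real_mult_indicator[OF AM exp_martingale_expectation(1)[OF sT(1)]])
  have t_int: "integrable M (\<lambda>\<omega>. exp_martingale W l t \<omega> * indicator A \<omega>)"
    by (rule integrable_real_mult_indicator[OF AM exp_martingale_expectation(1)[OF sT(2)]])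
  have split: "exp_martingale W l t \<omega> * indicator A \<omega>
      = h \<omega> * exp (l * (W t \<omega> - W s \<omega>)) * exp (- (l\<^sup>2 * (t - s) / 2))" for \<omega>
    unfolding h_def by (subst exp_martingale_split[of _ _ _ _ s]) (simp add: mult_ac)
  have "expectation (\<lambda>\<omega>. exp_martingale W l t \<omega> * indicator A \<omega>) = expectation h"
    unfolding split using expectation_mult_exp_increment(2)[OF st h_F h_int, of l]
    by (simp add: exp_minus field_simps)
  then have "expectation (\<lambda>\<omega>. exp_martingale W l t \<omega> * indicator A \<omega> - h \<omega>) = 0"
    using t_int h_int by simp
  then show ?thesis by (simp add: h_def left_diff_distrib)
qed

lemma exp_martingale_at_grid_time:
  assumes \<tau>: "\<tau> \<in> stopping_times0 M F T"
  shows "integrable M (\<lambda>\<omega>. exp_martingale W l (grid_time T n \<tau> \<omega>) \<omega>)"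
    and "expectation (\<lambda>\<omega>. exp_martingale W l (grid_time T n \<tau> \<omega>) \<omega>) = 1"
proof -
  define t where "t k = real k * T / real (Suc n)" for k
  define A where "A k = {\<omega>\<in>space M. \<tau> \<omega> \<le> t k}" for k
  define D where "D k \<omega> = (exp_martingale W l (t (Suc k)) \<omega> - exp_martingale W l (t k) \<omega>) * indicator (A k) \<omega>" for k \<omega>
  have t: "k \<le> Suc n \<Longrightarrow> t k \<in> {0..T}" for k
    using horizon_pos by (auto simp: t_def field_simps simp del: of_nat_Suc)
  have t_less: "t k < t (Suc k)" for k
    using horizon_pos by (simp add: t_def divide_strict_right_mono del: of_nat_Suc)
  have A_F: "k \<le> Suc n \<Longrightarrow> A k \<in> sets (F (t k))" for k
    unfolding A_def using stopping_time_le_sets[OF \<tau> t] .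
  have D_int: "k < Suc n \<Longrightarrow> integrable M (D k)" for k
    unfolding D_def using A_F[of k] sets_F_subset[OF t[of k]] t exp_martingale_expectation(1)
    by (intro integrable_real_mult_indicator integrable_diff) auto
  have D_expectation: "k < Suc n \<Longrightarrow> expectation (D k) = 0" for k
    unfolding D_def using exp_martingale_increment_orthogonal t[of k] t[of "Suc k"] t_less A_F[of k] by auto
  have sum: "\<And>\<omega>. \<omega> \<in> space M \<Longrightarrow> exp_martingale W l (grid_time T n \<tau> \<omega>) \<omega> = exp_martingale W l T \<omega> - (\<Sum>k<Suc n. D k \<omega>)"
    using stopped_at_grid_time_eq_sum[OF \<tau>] unfolding D_def A_def t_def by simp
  have T_int: "integrable M (exp_martingale W l T)"
    using exp_martingale_expectation(1)[of T] horizon_pos by simp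
  have sum_int: "integrable M (\<lambda>\<omega>. \<Sum>k<Suc n. D k \<omega>)"
    using D_int by (intro Bochner_Integration.integrable_sum) auto
  show "integrable M (\<lambda>\<omega>. exp_martingale W l (grid_time T n \<tau> \<omega>) \<omega>)"
    by (subst Bochner_Integration.integrable_cong[OF refl sum]) (use T_int sum_int in auto)
  have "expectation (\<lambda>\<omega>. exp_martingale W l (grid_time T n \<tau> \<omega>) \<omega>)
      = expectation (exp_martingale W l T) - (\<Sum>k<Suc n. expectation (D k))"
    by (subst Bochner_Integration.integral_cong[OF refl sum])
       (use T_int sum_int D_int in \<open>simp_all add: Bochner_Integration.integral_sum del: sum.lessThan_Suc\<close>)
  then show "expectation (\<lambda>\<omega>. exp_martingale W l (grid_time T n \<tau> \<omega>) \<omega>) = 1"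
    using D_expectation exp_martingale_expectation(2)[of T] horizon_pos by simp
qed

text \<open>Optional stopping, one inequality: pass to the limit along the grid approximations,
  whose second moments are bounded by \<open>exp (l\<^sup>2 T)\<close>.\<close>
lemma exp_martingale_stopped:
  assumes \<tau>: "\<tau> \<in> stopping_times0 M F T"
  shows "integrable M (\<lambda>\<omega>. exp_martingale W l (\<tau> \<omega>) \<omega>)"
    and "1 \<le> expectation (\<lambda>\<omega>. exp_martingale W l (\<tau> \<omega>) \<omega>)"
proof -
  let ?Z = "\<lambda>l n \<omega>. exp_martingale W l (grid_time T n \<tau> \<omega>) \<omega>"
  have int_sq: "integrable M (\<lambda>\<omega>. (?Z l n \<omega>)\<^sup>2)"
    and bounded_sq: "expectation (\<lambda>\<omega>. (?Z l n \<omega>)\<^sup>2) \<le> exp (l\<^sup>2 * T)" for n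
  proof -
    have int2: "integrable M (\<lambda>\<omega>. ?Z (2 * l) n \<omega> * exp (l\<^sup>2 * T))"
      using exp_martingale_at_grid_time(1)[OF \<tau>] by simp
    have le: "(?Z l n \<omega>)\<^sup>2 \<le> ?Z (2 * l) n \<omega> * exp (l\<^sup>2 * T)" if "\<omega> \<in> space M" for \<omega>
      unfolding exp_martingale_square using grid_time_bounds(3)[OF \<tau> that, of n]
      by (intro mult_left_mono) (auto intro: less_imp_le exp_martingale_pos mult_left_mono)
    have "?Z l n \<in> borel_measurable M"
      using exp_martingale_at_grid_time(1)[OF \<tau>] by blast
    then show "integrable M (\<lambda>\<omega>. (?Z l n \<omega>)\<^sup>2)"
      by (intro Bochner_Integration.integrable_bound[OF int2])
         (use le in \<open>auto intro!: AE_I2 simp: abs_mult abs_of_pos exp_martingale_pos\<close>)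
    then have "expectation (\<lambda>\<omega>. (?Z l n \<omega>)\<^sup>2) \<le> expectation (\<lambda>\<omega>. ?Z (2 * l) n \<omega> * exp (l\<^sup>2 * T))"
      using int2 le by (intro integral_mono) auto
    then show "expectation (\<lambda>\<omega>. (?Z l n \<omega>)\<^sup>2) \<le> exp (l\<^sup>2 * T)"
      using exp_martingale_at_grid_time(2)[OF \<tau>, of "2 * l" n] by simp
  qed
  have lim: "(\<lambda>n. ?Z l n \<omega>) \<longlonglongrightarrow> exp_martingale W l (\<tau> \<omega>) \<omega>" if \<omega>: "\<omega> \<in> space M" for \<omega>
  proof -
    have "(\<lambda>n. W (grid_time T n \<tau> \<omega>) \<omega>) \<longlonglongrightarrow> W (\<tau> \<omega>) \<omega>"
      using stopping_time_range[OF \<tau> \<omega>] grid_time_bounds[OF \<tau> \<omega>]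
      by (intro continuous_on_tendsto_compose[OF W_continuous[OF \<omega>] grid_time_tendsto[OF \<tau> \<omega>]])
         (auto intro!: always_eventually intro: order_trans)
    then show ?thesis
      unfolding exp_martingale_def by (auto intro!: tendsto_intros grid_time_tendsto[OF \<tau> \<omega>])
  qed
  show "integrable M (\<lambda>\<omega>. exp_martingale W l (\<tau> \<omega>) \<omega>)"
    and "1 \<le> expectation (\<lambda>\<omega>. exp_martingale W l (\<tau> \<omega>) \<omega>)"
    by (rule expectation_limit_ge_of_L2_bounded[OF exp_martingale_at_grid_time(1)[OF \<tau>]
          less_imp_le[OF exp_martingale_pos] lim exp_martingale_at_grid_time(2)[OF \<tau>] int_sq bounded_sq],
        assumption)+
qed

section \<open>Deviations from the two equilibria\<close>

lemma stopped_W_measurable: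
  assumes \<tau>: "\<tau> \<in> stopping_times0 M F T"
  shows "(\<lambda>\<omega>. W (\<tau> \<omega>) \<omega>) \<in> borel_measurable M"
proof -
  have "(\<lambda>\<omega>. ln (exp_martingale W 1 (\<tau> \<omega>) \<omega>) + \<tau> \<omega> / 2) \<in> borel_measurable M"
    using exp_martingale_stopped(1)[OF \<tau>] stopping_time_borel_measurable[OF \<tau>] by measurable
  then show ?thesis by (simp add: exp_martingale_def)
qed

lemma expectation_ge_of_exp_martingale_bounds:
  assumes \<tau>: "\<tau> \<in> stopping_times0 M F T" and f: "f \<in> borel_measurable M" and "0 \<le> c"
    and lower: "\<And>\<omega>. \<omega> \<in> space M \<Longrightarrow> c * exp_martingale W l (\<tau> \<omega>) \<omega> \<le> f \<omega>"
    and upper: "\<And>\<omega>. \<omega> \<in> space M \<Longrightarrow> f \<omega> \<le> C * exp_martingale W l (\<tau> \<omega>) \<omega>"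
  shows "integrable M f" and "c \<le> expectation f"
proof -
  note Z = exp_martingale_stopped[OF \<tau>, of l]
  have "0 \<le> f \<omega>" if "\<omega> \<in> space M" for \<omega>
    using \<open>0 \<le> c\<close> exp_martingale_pos lower[OF that] by (meson less_imp_le mult_nonneg_nonneg order_trans)
  then have "\<bar>f \<omega>\<bar> \<le> \<bar>C * exp_martingale W l (\<tau> \<omega>) \<omega>\<bar>" if "\<omega> \<in> space M" for \<omega>
    using upper[OF that] that by fastforce
  then show f_int: "integrable M f"
    by (intro Bochner_Integration.integrable_bound[OF integrable_mult_right[OF Z(1), of C] f] AE_I2) simp
  have "c \<le> c * expectation (\<lambda>\<omega>. exp_martingale W l (\<tau> \<omega>) \<omega>)"
    using Z(2) \<open>0 \<le> c\<close> by (simp add: mult_le_cancel_left1)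
  also have "\<dots> \<le> expectation f"
    using integral_mono[OF integrable_mult_right[OF Z(1)] f_int lower] by simp
  finally show "c \<le> expectation f" .
qed

lemma utilities_buyer_stops_at_0:
  assumes "\<sigma> \<in> stopping_times0 M F T"
  shows "uA M a W Y (\<lambda>_. 0) \<sigma> = -1" and "uB M b W Y (\<lambda>_. 0) \<sigma> = -1"
proof -
  have "payoff W Y (\<lambda>_. 0) \<sigma> \<omega> = 0" if "\<omega> \<in> space M" for \<omega>
    using stopping_time_range[OF assms that] W_zero[OF that] by (simp add: payoff_def)
  then show "uA M a W Y (\<lambda>_. 0) \<sigma> = -1" and "uB M b W Y (\<lambda>_. 0) \<sigma> = -1"
    unfolding uA_def uB_def by (simp_all add: expectation_eq_const)
qed

lemma utilities_seller_stops_at_0: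
  "uA M a W (\<lambda>t \<omega>. W t \<omega> + \<delta>) (\<lambda>_. T) (\<lambda>_. 0) = - exp (a * \<delta>)"
  "uB M b W (\<lambda>t \<omega>. W t \<omega> + \<delta>) (\<lambda>_. T) (\<lambda>_. 0) = - exp (- b * \<delta>)"
proof -
  have "payoff W (\<lambda>t \<omega>. W t \<omega> + \<delta>) (\<lambda>_. T) (\<lambda>_. 0) \<omega> = \<delta>" if "\<omega> \<in> space M" for \<omega>
    using horizon_pos W_zero[OF that] by (simp add: payoff_def)
  then show "uA M a W (\<lambda>t \<omega>. W t \<omega> + \<delta>) (\<lambda>_. T) (\<lambda>_. 0) = - exp (a * \<delta>)"
    and "uB M b W (\<lambda>t \<omega>. W t \<omega> + \<delta>) (\<lambda>_. T) (\<lambda>_. 0) = - exp (- b * \<delta>)"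
    unfolding uA_def uB_def by (simp_all add: expectation_eq_const)
qed

lemma uB_le_if_seller_waits:
  assumes \<tau>: "\<tau> \<in> stopping_times0 M F T"
  shows "uB M b W Y \<tau> (\<lambda>_. T) \<le> -1"
proof -
  have payoff: "payoff W Y \<tau> (\<lambda>_. T) \<omega> = W (\<tau> \<omega>) \<omega>" if "\<omega> \<in> space M" for \<omega>
    using stopping_time_range[OF \<tau> that] by (simp add: payoff_def)
  have "1 \<le> expectation (\<lambda>\<omega>. exp (- b * W (\<tau> \<omega>) \<omega>))"
  proof (rule expectation_ge_of_exp_martingale_bounds(2)[OF \<tau>, where l="- b" and C="exp (b\<^sup>2 * T / 2)"])
    fix \<omega> assume \<omega>: "\<omega> \<in> space M"
    note Z_pos = exp_martingale_pos[of W "- b" "\<tau> \<omega>" \<omega>]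
    have exp: "exp (- b * W (\<tau> \<omega>) \<omega>) = exp_martingale W (- b) (\<tau> \<omega>) \<omega> * exp (b\<^sup>2 * \<tau> \<omega> / 2)"
      using exp_eq_exp_martingale[of "- b"] by simp
    show "1 * exp_martingale W (- b) (\<tau> \<omega>) \<omega> \<le> exp (- b * W (\<tau> \<omega>) \<omega>)"
      unfolding exp using stopping_time_range[OF \<tau> \<omega>] Z_pos by simp
    show "exp (- b * W (\<tau> \<omega>) \<omega>) \<le> exp (b\<^sup>2 * T / 2) * exp_martingale W (- b) (\<tau> \<omega>) \<omega>"
      unfolding exp using stopping_time_range[OF \<tau> \<omega>] Z_pos
      by (auto simp: mult.commute intro!: mult_left_mono mult_right_mono)
  qed (use stopped_W_measurable[OF \<tau>] in simp_all)
  moreover have "uB M b W Y \<tau> (\<lambda>_. T) = - expectation (\<lambda>\<omega>. exp (- b * W (\<tau> \<omega>) \<omega>))"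
    unfolding uB_def by (subst Bochner_Integration.integral_cong[OF refl]) (simp_all add: payoff)
  ultimately show ?thesis by simp
qed

lemma uB_le_if_seller_stops_at_0:
  assumes \<tau>: "\<tau> \<in> stopping_times0 M F T" and "0 \<le> b" "0 \<le> \<delta>"
  shows "uB M b W (\<lambda>t \<omega>. W t \<omega> + \<delta>) \<tau> (\<lambda>_. 0) \<le> - exp (- b * \<delta>)"
proof -
  let ?f = "\<lambda>\<omega>. exp (- b * payoff W (\<lambda>t \<omega>. W t \<omega> + \<delta>) \<tau> (\<lambda>_. 0) \<omega>)"
  have f: "?f \<omega> = (if \<tau> \<omega> = 0 then 1 else exp (- b * \<delta>))" if "\<omega> \<in> space M" for \<omega>
    using stopping_time_range[OF \<tau> that] W_zero[OF that] by (auto simp: payoff_def)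
  have bounds: "exp (- b * \<delta>) \<le> ?f \<omega> \<and> ?f \<omega> \<le> 1" if "\<omega> \<in> space M" for \<omega>
    unfolding f[OF that] using assms by (simp add: mult_nonneg_nonneg)
  have "?f \<in> borel_measurable M"
    using stopping_time_borel_measurable[OF \<tau>] by (subst measurable_cong[OF f]) measurable
  then have "integrable M ?f"
    using bounds by (intro integrable_const_bound[where B=1] AE_I2) auto
  then have "exp (- b * \<delta>) \<le> expectation ?f"
    using integral_mono[of M "\<lambda>_. exp (- b * \<delta>)" ?f] bounds by (simp add: prob_space)
  then show ?thesis unfolding uB_def by simp
qed

lemma uA_le_if_buyer_waits:
  assumes \<sigma>: "\<sigma> \<in> stopping_times0 M F T" and "0 \<le> a" and \<delta>: "\<delta> \<le> a / 2 * T"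
  shows "uA M a W (\<lambda>t \<omega>. W t \<omega> + \<delta>) (\<lambda>_. T) \<sigma> \<le> - exp (a * \<delta>)"
proof -
  let ?R = "payoff W (\<lambda>t \<omega>. W t \<omega> + \<delta>) (\<lambda>_. T) \<sigma>"
  let ?E = "\<lambda>\<omega>. a\<^sup>2 * \<sigma> \<omega> / 2 + (if \<sigma> \<omega> = T then 0 else a * \<delta>)"
  have a\<delta>: "a * \<delta> \<le> a\<^sup>2 * T / 2"
    using mult_left_mono[OF \<delta> \<open>0 \<le> a\<close>] by (simp add: power2_eq_square)
  have "T \<in> {0..T}" using horizon_pos by simp
  note [measurable] = stopping_time_borel_measurable[OF \<sigma>] stopped_W_measurable[OF \<sigma>] W_measurable[OF this]
  have measurable: "(\<lambda>\<omega>. exp (a * ?R \<omega>)) \<in> borel_measurable M"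
    unfolding payoff_def by measurable
  have "exp (a * \<delta>) \<le> expectation (\<lambda>\<omega>. exp (a * ?R \<omega>))"
  proof (rule expectation_ge_of_exp_martingale_bounds(2)[OF \<sigma> measurable, where l=a and C="exp (a\<^sup>2 * T)"])
    fix \<omega> assume \<omega>: "\<omega> \<in> space M"
    note \<sigma>_range = stopping_time_range[OF \<sigma> \<omega>]
    have "?R \<omega> = W (\<sigma> \<omega>) \<omega> + (if \<sigma> \<omega> = T then 0 else \<delta>)"
      using \<sigma>_range by (auto simp: payoff_def)
    then have R: "exp (a * ?R \<omega>) = exp_martingale W a (\<sigma> \<omega>) \<omega> * exp (?E \<omega>)"
      by (simp add: distrib_left exp_add exp_eq_exp_martingale[of a W "\<sigma> \<omega>" \<omega>])
    have "a\<^sup>2 * \<sigma> \<omega> \<le> a\<^sup>2 * T" using \<sigma>_range by (simp add: mult_left_mono)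
    then have "a * \<delta> \<le> ?E \<omega>" and "?E \<omega> \<le> a\<^sup>2 * T" using a\<delta> \<sigma>_range by auto
    then show "exp (a * \<delta>) * exp_martingale W a (\<sigma> \<omega>) \<omega> \<le> exp (a * ?R \<omega>)"
      and "exp (a * ?R \<omega>) \<le> exp (a\<^sup>2 * T) * exp_martingale W a (\<sigma> \<omega>) \<omega>"
      unfolding R using exp_martingale_pos[of W a "\<sigma> \<omega>" \<omega>] by (simp_all add: mult.commute)
  qed simp
  then show ?thesis unfolding uA_def by simp
qed

end

theorem mainTheorem12:
  fixes M :: "'a measure" and F :: "real \<Rightarrow> 'a measure" and T \<alpha>A \<alpha>B \<delta> :: real
    and W :: "real \<Rightarrow> 'a \<Rightarrow> real"
  assumes "filtered_prob_space_usual M F T"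
    and "brownian_motion M F T W"
    and "0 < \<alpha>A" and "0 < \<alpha>B"
    and "0 < \<delta>" and "\<delta> < (\<alpha>A / 2) * T"
  defines "X \<equiv> (\<lambda>t \<omega>. W t \<omega>)" and "Y \<equiv> (\<lambda>t \<omega>. W t \<omega> + \<delta>)"
  shows "nash_equilibrium M F T \<alpha>A \<alpha>B X Y (\<lambda>_. 0) (\<lambda>_. T)
       \<and> nash_equilibrium M F T \<alpha>A \<alpha>B X Y (\<lambda>_. T) (\<lambda>_. 0)
       \<and> uA M \<alpha>A X Y (\<lambda>_. 0) (\<lambda>_. T) = -1 \<and> uB M \<alpha>B X Y (\<lambda>_. 0) (\<lambda>_. T) = -1
       \<and> uA M \<alpha>A X Y (\<lambda>_. T) (\<lambda>_. 0) = - exp (\<alpha>A * \<delta>)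
       \<and> uB M \<alpha>B X Y (\<lambda>_. T) (\<lambda>_. 0) = - exp (- \<alpha>B * \<delta>)"
proof -
  interpret brownian_filtration M F T W
    using assms(1,2) by (intro brownian_filtration.intro brownian_filtration_axioms.intro usual_filtration.intro)
  have stop_0: "(\<lambda>_. 0) \<in> stopping_times0 M F T" and stop_T: "(\<lambda>_. T) \<in> stopping_times0 M F T"
    using horizon_pos by (auto intro: const_stopping_time)
  have X: "X = W" unfolding X_def ..
  show ?thesis
    unfolding X Y_def nash_equilibrium_def
    using stop_0 stop_T utilities_buyer_stops_at_0 utilities_seller_stops_at_0
      uB_le_if_seller_waits uA_le_if_buyer_waits[of _ \<alpha>A \<delta>] uB_le_if_seller_stops_at_0[of _ \<alpha>B \<delta>] assms(3-6)
    by auto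
qed

end
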